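(* Let $f,g_1,g_2\in L^2(\mathbb{R}^2\times\mathbb{R})$ with $\|f\|_{L^2}=\|g_1\|_{L^2}=\|g_2\|_{L^2}=1$ and $\operatorname{supp}f\subset\mathfrak{P}_N\cap\mathfrak{W}^\pm_L$, $\operatorname{supp}g_k\subset\mathfrak{Q}^A_{j_k}\cap\mathfrak{P}_{N_k}\cap\mathfrak{S}_{L_k}$ ($k=1,2$), where $1\ll N\lesssim N_1\sim N_2$, $A\sim N_1$ and $|j_1-j_2|\le16$. Then for all dyadic $L,L_1,L_2\ge1$, $$\Big|\int f(\zeta_1-\zeta_2)g_1(\zeta_1)g_2(\zeta_2)\,d\zeta_1d\zeta_2\Big|\lesssim L_1^{5/12}L_2^{5/12}L^{5/12}\frac1{N^{1/2}}\Big(\frac{N}{N_1}\Big)^{1/4}.$$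
   Context: Points are $\zeta=(\xi,\tau)\in\mathbb{R}^2\times\mathbb{R}$. Dyadic numbers are $2^n$, $n\ge0$; $N,N_1,N_2,A$ are dyadic. $\mathfrak{P}_1=\{|\xi|\le2\}$, $\mathfrak{P}_N=\{N/2\le|\xi|\le2N\}$ ($N\ge2$); $\mathfrak{S}_1=\{|\tau+|\xi|^2|\le2\}$, $\mathfrak{S}_L=\{L/2\le|\tau+|\xi|^2|\le2L\}$; $\mathfrak{W}^\pm_1=\{|\tau\pm|\xi||\le2\}$, $\mathfrak{W}^\pm_L=\{L/2\le|\tau\pm|\xi||\le2L\}$ ($L\ge2$). For $A\in\mathbb{N}$, $0\le j\le A-1$: $\Theta^A_j=[\frac{\pi}{A}(j-2),\frac{\pi}{A}(j+2)]\cup[-\pi+\frac{\pi}{A}(j-2),-\pi+\frac{\pi}{A}(j+2)]$, $\mathfrak{Q}^A_j=\{(|\xi|\cos\theta,|\xi|\sin\theta,\tau):\theta\in\Theta^A_j\}$. $A\lesssim B$: $A\le cB$ with an absolute constant; $\sim$: both directions; $1\ll N$: $N\ge C$ for a sufficiently large absolute constant $C$. *)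

theory Defs
  imports "HOL-Analysis.Analysis"
begin

text \<open>Points zeta = (xi, tau) with xi = (xi1, xi2) in R^2 and tau in R.\<close>
type_synonym pt = "(real \<times> real) \<times> real"

definition xnorm :: "real \<times> real \<Rightarrow> real" where
  "xnorm xi = sqrt ((fst xi)\<^sup>2 + (snd xi)\<^sup>2)"

definition dyadic :: "real \<Rightarrow> bool" where
  "dyadic x \<longleftrightarrow> (\<exists>n::nat. x = 2 ^ n)"

definition PP :: "real \<Rightarrow> pt set" where
  "PP N = (if N = 1 then {z. xnorm (fst z) \<le> 2}
           else {z. N / 2 \<le> xnorm (fst z) \<and> xnorm (fst z) \<le> 2 * N})"

definition SS :: "real \<Rightarrow> pt set" where
  "SS L = (if L = 1 then {z. \<bar>snd z + (xnorm (fst z))\<^sup>2\<bar> \<le> 2}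
           else {z. L / 2 \<le> \<bar>snd z + (xnorm (fst z))\<^sup>2\<bar> \<and> \<bar>snd z + (xnorm (fst z))\<^sup>2\<bar> \<le> 2 * L})"

text \<open>Modulation set W^pm_L for the wave symbol tau pm |xi|; the sign s is 1 or -1.\<close>
definition WW :: "real \<Rightarrow> real \<Rightarrow> pt set" where
  "WW s L = (if L = 1 then {z. \<bar>snd z + s * xnorm (fst z)\<bar> \<le> 2}
           else {z. L / 2 \<le> \<bar>snd z + s * xnorm (fst z)\<bar> \<and> \<bar>snd z + s * xnorm (fst z)\<bar> \<le> 2 * L})"

definition Theta :: "nat \<Rightarrow> nat \<Rightarrow> real set" where
  "Theta A j = {pi / real A * (real j - 2) .. pi / real A * (real j + 2)}
             \<union> {- pi + pi / real A * (real j - 2) .. - pi + pi / real A * (real j + 2)}"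

definition QQ :: "nat \<Rightarrow> nat \<Rightarrow> pt set" where
  "QQ A j = {z. \<exists>\<theta>\<in>Theta A j.
               fst (fst z) = xnorm (fst z) * cos \<theta> \<and> snd (fst z) = xnorm (fst z) * sin \<theta>}"

definition L2unit :: "(pt \<Rightarrow> complex) \<Rightarrow> bool" where
  "L2unit f \<longleftrightarrow> f \<in> borel_measurable lborel
     \<and> integrable lborel (\<lambda>z. (norm (f z))\<^sup>2)
     \<and> (\<integral>z. (norm (f z))\<^sup>2 \<partial>lborel) = 1"

end

theory Submission
  imports Defs
begin

text \<open>
  Replacing \<open>f, g\<^sub>1, g\<^sub>2\<close> by their absolute values bounds the integral by a convolution pairing
  \<open>\<integral>\<integral> a(\<zeta>\<^sub>1 - \<zeta>\<^sub>2) b(\<zeta>\<^sub>1) c(\<zeta>\<^sub>2)\<close> of three functions of unit \<open>L\<^sup>2\<close> norm. Cauchy-Schwarz, with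
  any one of the three factors pulled out, bounds it by the square root of the largest measure of
  a fibre of the supports of the other two over a point of the support of the third. The two
  Schroedinger pieces lie in sectors of angle \<open>\<approx> 1/N\<^sub>1\<close> and radius \<open>\<approx> N\<^sub>1\<close>, hence in one strip of
  width \<open>O(1)\<close>; inside this strip the modulation constraints cut out a slab transversal to the
  strip, and the fibres in the time direction have length \<open>O(min L\<^sub>i L\<^sub>j)\<close>. This gives
  \<open>|I|\<^sup>2 \<lesssim> L\<^sub>1L\<^sub>2/N, LL\<^sub>2/N\<^sub>2, LL\<^sub>1/N\<^sub>1\<close>, and the geometric mean of the three bounds is the claim,
  since \<open>N \<lesssim> N\<^sub>1 \<sim> N\<^sub>2\<close> and all modulations are at least \<open>1\<close>.
\<close>

section \<open>Invariance of Lebesgue measure\<close>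

lemma lborel_distr_minus:
  fixes t :: "'a::euclidean_space"
  shows "distr lborel borel (\<lambda>x. t - x) = lborel"
  using lborel_affine[of "-1" t] by (simp add: density_1)

lemma emeasure_lborel_translate:
  fixes t :: "'a::euclidean_space"
  assumes "B \<in> sets borel"
  shows "emeasure lborel ((+) t -` B) = emeasure lborel B"
  using assms by (subst (2) lborel_distr_plus[of t, symmetric]) (simp add: emeasure_distr)

lemma emeasure_lborel_reflect:
  fixes t :: "'a::euclidean_space"
  assumes "B \<in> sets borel"
  shows "emeasure lborel ((\<lambda>x. t - x) -` B) = emeasure lborel B"
  using assms by (subst (2) lborel_distr_minus[of t, symmetric]) (simp add: emeasure_distr)

lemma nn_integral_lborel_translate:
  fixes t :: "'a::euclidean_space"
  assumes "h \<in> borel_measurable borel"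
  shows "(\<integral>\<^sup>+x. h (t + x) \<partial>lborel) = (\<integral>\<^sup>+x. h x \<partial>lborel)"
  using assms by (subst (2) lborel_distr_plus[of t, symmetric]) (simp add: nn_integral_distr)

lemma nn_integral_lborel_reflect:
  fixes t :: "'a::euclidean_space"
  assumes "h \<in> borel_measurable borel"
  shows "(\<integral>\<^sup>+x. h (t - x) \<partial>lborel) = (\<integral>\<^sup>+x. h x \<partial>lborel)"
  using assms by (subst (2) lborel_distr_minus[of t, symmetric]) (simp add: nn_integral_distr)

lemma lborel_pair_distr_shear:
  fixes h :: "'a::euclidean_space \<Rightarrow> 'b::euclidean_space"
  assumes [measurable]: "h \<in> borel_measurable borel"
  shows "distr (lborel \<Otimes>\<^sub>M lborel) (lborel \<Otimes>\<^sub>M lborel) (\<lambda>(x, y). (x, y + h x)) = lborel \<Otimes>\<^sub>M lborel"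
    (is "distr _ _ ?T = _")
proof (rule measure_eqI)
  fix A assume A: "A \<in> sets (distr (lborel \<Otimes>\<^sub>M lborel) (lborel \<Otimes>\<^sub>M lborel) ?T)"
  then have A': "A \<in> sets (lborel \<Otimes>\<^sub>M lborel)" by simp
  have T: "?T \<in> measurable (lborel \<Otimes>\<^sub>M lborel) (lborel \<Otimes>\<^sub>M lborel)" by measurable
  have TA: "?T -` A \<in> sets (lborel \<Otimes>\<^sub>M lborel)"
    using measurable_sets[OF T A'] by (simp add: space_pair_measure)
  have "emeasure (distr (lborel \<Otimes>\<^sub>M lborel) (lborel \<Otimes>\<^sub>M lborel) ?T) A
      = emeasure (lborel \<Otimes>\<^sub>M lborel) (?T -` A)"
    using A' by (simp add: emeasure_distr space_pair_measure)
  also have "\<dots> = (\<integral>\<^sup>+x. emeasure lborel ((+) (h x) -` (Pair x -` A)) \<partial>lborel)"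
    by (subst lborel.emeasure_pair_measure_alt[OF TA]) (auto intro!: nn_integral_cong arg_cong[where f="emeasure lborel"] simp: add.commute)
  also have "\<dots> = (\<integral>\<^sup>+x. emeasure lborel (Pair x -` A) \<partial>lborel)"
    using sets_Pair1[OF A'] by (simp add: emeasure_lborel_translate)
  also have "\<dots> = emeasure (lborel \<Otimes>\<^sub>M lborel) A"
    by (rule lborel.emeasure_pair_measure_alt[OF A', symmetric])
  finally show "emeasure (distr (lborel \<Otimes>\<^sub>M lborel) (lborel \<Otimes>\<^sub>M lborel) ?T) A = emeasure (lborel \<Otimes>\<^sub>M lborel) A" .
qed simp

lemma borel_measurable_linear_plane:
  fixes a b c d :: real
  shows "(\<lambda>(x, y). (a * x + b * y, c * x + d * y)) \<in> borel_measurable borel"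
proof -
  have "(\<lambda>(x, y). (a * x + b * y, c * x + d * y)) \<in> measurable (borel \<Otimes>\<^sub>M borel) (borel \<Otimes>\<^sub>M borel :: (real \<times> real) measure)"
    by measurable
  then show ?thesis
    unfolding borel_prod .
qed

lemma lborel_distr_comp:
  fixes f g :: "'a::euclidean_space \<Rightarrow> 'a"
  assumes [measurable]: "f \<in> borel_measurable borel" "g \<in> borel_measurable borel"
    and "distr lborel borel f = lborel" "distr lborel borel g = lborel"
  shows "distr lborel borel (f \<circ> g) = lborel"
proof -
  have "distr lborel borel (f \<circ> g) = distr (distr lborel borel g) borel f"
    by (subst distr_distr) auto
  then show ?thesis
    using assms(3,4) by simp
qed

lemma lborel_distr_shear_vertical: "distr lborel borel (\<lambda>(x, y). (x, y + a * x)) = (lborel :: (real \<times> real) measure)"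
proof -
  have "distr lborel borel (\<lambda>(x, y). (x, y + a * x)) = distr (lborel \<Otimes>\<^sub>M lborel) (lborel \<Otimes>\<^sub>M lborel) (\<lambda>(x, y::real). (x, y + a * x))"
    by (auto simp: lborel_prod intro!: distr_cong)
  also have "\<dots> = lborel \<Otimes>\<^sub>M lborel"
    by (rule lborel_pair_distr_shear) simp
  finally show ?thesis
    by (simp add: lborel_prod)
qed

lemma lborel_distr_swap: "distr lborel borel prod.swap = (lborel :: (real \<times> real) measure)"
proof -
  have "distr lborel borel prod.swap = distr (lborel \<Otimes>\<^sub>M lborel) (lborel \<Otimes>\<^sub>M lborel) (\<lambda>(x, y). (y, x :: real))"
    by (auto simp: lborel_prod prod.swap_def split_beta intro!: distr_cong)
  also have "\<dots> = lborel \<Otimes>\<^sub>M lborel"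
    by (rule lborel_pair.distr_pair_swap[symmetric])
  finally show ?thesis
    by (simp add: lborel_prod)
qed

lemma lborel_distr_shear_horizontal: "distr lborel borel (\<lambda>(x, y). (x + a * y, y)) = (lborel :: (real \<times> real) measure)"
proof -
  have swap: "prod.swap \<in> borel_measurable (borel :: (real \<times> real) measure)"
  proof -
    have "prod.swap = (\<lambda>(x, y). (0 * x + 1 * y, 1 * x + 0 * (y::real)))"
      by (auto simp: fun_eq_iff)
    then show ?thesis
      using borel_measurable_linear_plane[of 0 1 1 0] by simp
  qed
  have shear: "(\<lambda>(x, y). (x, y + a * x)) \<in> borel_measurable (borel :: (real \<times> real) measure)"
    using borel_measurable_linear_plane[of 1 0 a 1] by (simp add: add.commute)
  have "(\<lambda>(x, y). (x + a * y, y)) = prod.swap \<circ> ((\<lambda>(x, y). (x, y + a * x)) \<circ> prod.swap)"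
    by (auto simp: fun_eq_iff)
  then show ?thesis
    using swap shear
    by (simp add: lborel_distr_comp measurable_comp lborel_distr_swap lborel_distr_shear_vertical)
qed

lemma lborel_distr_rotation:
  fixes c s :: real
  assumes cs: "c\<^sup>2 + s\<^sup>2 = 1"
  shows "distr lborel borel (\<lambda>(x, y). (c * x - s * y, s * x + c * y)) = (lborel :: (real \<times> real) measure)"
proof (cases "c = -1")
  case True
  then have "s = 0"
    using cs by (simp add: power2_eq_square)
  with True have "(\<lambda>(x, y). (c * x - s * y, s * x + c * y)) = (\<lambda>z::real \<times> real. 0 - z)"
    by auto
  then show ?thesis
    using lborel_distr_minus[of "0::real \<times> real"] by simp
next
  case False
  define t where "t = - s / (1 + c)"
  have c1: "1 + c \<noteq> 0"
    using False by linarith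
  have ct: "1 + t * s = c"
    using c1 cs by (simp add: t_def field_simps power2_eq_square)
  have "t * (1 + t * s) + t = t * (1 + c)"
    unfolding ct[symmetric] by (simp add: algebra_simps)
  then have st: "t * (1 + t * s) + t = -s"
    using c1 by (simp add: t_def)
  text \<open>A rotation is the product of three shears.\<close>
  have "(\<lambda>(x, y). (c * x - s * y, s * x + c * y)) =
        (\<lambda>(x, y). (x + t * y, y)) \<circ> ((\<lambda>(x, y). (x, y + s * x)) \<circ> (\<lambda>(x, y). (x + t * y, y)))"
  proof (rule ext, clarify)
    fix x y :: real
    have "x + t * y + t * (y + s * (x + t * y)) = (1 + t * s) * x + (t * (1 + t * s) + t) * y"
      and "y + s * (x + t * y) = s * x + (1 + t * s) * y"
      by (simp_all add: algebra_simps)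
    then show "(c * x - s * y, s * x + c * y) =
        ((\<lambda>(x, y). (x + t * y, y)) \<circ> ((\<lambda>(x, y). (x, y + s * x)) \<circ> (\<lambda>(x, y). (x + t * y, y)))) (x, y)"
      using ct st by simp
  qed
  moreover have "(\<lambda>(x, y). (x + t * y, y)) \<in> borel_measurable (borel :: (real \<times> real) measure)"
    using borel_measurable_linear_plane[of 1 t 0 1] by simp
  moreover have "(\<lambda>(x, y). (x, y + s * x)) \<in> borel_measurable (borel :: (real \<times> real) measure)"
    using borel_measurable_linear_plane[of 1 0 s 1] by (simp add: add.commute)
  ultimately show ?thesis
    by (simp add: lborel_distr_comp measurable_comp lborel_distr_shear_horizontal lborel_distr_shear_vertical)
qed

section \<open>Cauchy-Schwarz for the convolution pairing\<close>

definition nonneg_L2_ball :: "('a::euclidean_space \<Rightarrow> real) \<Rightarrow> bool" where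
  "nonneg_L2_ball a \<longleftrightarrow> a \<in> borel_measurable borel \<and> (\<forall>z. 0 \<le> a z)
     \<and> (\<integral>\<^sup>+z. ennreal ((a z)\<^sup>2) \<partial>lborel) \<le> 1"

definition convolution_pairing :: "('a::euclidean_space \<Rightarrow> real) \<Rightarrow> ('a \<Rightarrow> real) \<Rightarrow> ('a \<Rightarrow> real) \<Rightarrow> ennreal" where
  "convolution_pairing a b c = (\<integral>\<^sup>+p. ennreal (a (fst p - snd p) * b (fst p) * c (snd p)) \<partial>(lborel \<Otimes>\<^sub>M lborel))"

lemma nn_integral_mult_le_sqrt:
  fixes A B :: "'b \<Rightarrow> real"
  assumes [measurable]: "A \<in> borel_measurable M" "B \<in> borel_measurable M"
    and "\<And>x. 0 \<le> A x" "\<And>x. 0 \<le> B x"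
    and A: "(\<integral>\<^sup>+x. ennreal ((A x)\<^sup>2) \<partial>M) \<le> 1"
    and B: "(\<integral>\<^sup>+x. ennreal ((B x)\<^sup>2) \<partial>M) \<le> ennreal m" and m: "m > 0"
  shows "(\<integral>\<^sup>+x. ennreal (A x * B x) \<partial>M) \<le> ennreal (sqrt m)"
proof -
  define t where "t = sqrt m"
  have t: "t > 0"
    using m by (simp add: t_def)
  text \<open>Weighted AM-GM with the weight chosen to balance the two norms.\<close>
  have pointwise: "A x * B x \<le> (t / 2) * (A x)\<^sup>2 + (1 / (2 * t)) * (B x)\<^sup>2" for x
  proof -
    have "2 * t * (A x * B x) \<le> t\<^sup>2 * (A x)\<^sup>2 + (B x)\<^sup>2"
      using zero_le_power2[of "t * A x - B x"] by (simp add: power2_eq_square algebra_simps)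
    then show ?thesis
      using t by (simp add: field_simps power2_eq_square)
  qed
  have "(\<integral>\<^sup>+x. ennreal (A x * B x) \<partial>M)
      \<le> (\<integral>\<^sup>+x. ennreal (t / 2) * ennreal ((A x)\<^sup>2) + ennreal (1 / (2 * t)) * ennreal ((B x)\<^sup>2) \<partial>M)"
    using pointwise t
    by (intro nn_integral_mono) (simp add: ennreal_plus[symmetric] ennreal_mult[symmetric] ennreal_leI del: ennreal_plus)
  also have "\<dots> = ennreal (t / 2) * (\<integral>\<^sup>+x. ennreal ((A x)\<^sup>2) \<partial>M) + ennreal (1 / (2 * t)) * (\<integral>\<^sup>+x. ennreal ((B x)\<^sup>2) \<partial>M)"
    by (simp add: nn_integral_add nn_integral_cmult)
  also have "\<dots> \<le> ennreal (t / 2) * 1 + ennreal (1 / (2 * t)) * ennreal m"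
    by (intro add_mono mult_left_mono A B) auto
  also have "\<dots> = ennreal (t / 2 + m / (2 * t))"
    using t m by (simp add: ennreal_mult[symmetric] ennreal_plus[symmetric] del: ennreal_plus)
  also have "t / 2 + m / (2 * t) = sqrt m"
    using t m by (simp add: t_def field_simps)
  finally show ?thesis .
qed

lemma nn_integral_sq_mult_emeasure_le:
  fixes b :: "'a::euclidean_space \<Rightarrow> real"
  assumes "nonneg_L2_ball b" and "\<And>z. z \<notin> S \<Longrightarrow> b z = 0"
    and "\<And>z. z \<in> S \<Longrightarrow> emeasure lborel (E z) \<le> ennreal m"
  shows "(\<integral>\<^sup>+z. ennreal ((b z)\<^sup>2) * emeasure lborel (E z) \<partial>lborel) \<le> ennreal m"
proof -
  have [measurable]: "b \<in> borel_measurable borel"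
    using assms(1) by (simp add: nonneg_L2_ball_def)
  have "(\<integral>\<^sup>+z. ennreal ((b z)\<^sup>2) * emeasure lborel (E z) \<partial>lborel) \<le> (\<integral>\<^sup>+z. ennreal ((b z)\<^sup>2) * ennreal m \<partial>lborel)"
  proof (intro nn_integral_mono)
    fix z
    show "ennreal ((b z)\<^sup>2) * emeasure lborel (E z) \<le> ennreal ((b z)\<^sup>2) * ennreal m"
      using assms(2,3)[of z] by (cases "z \<in> S") (auto intro: mult_left_mono)
  qed
  also have "\<dots> = (\<integral>\<^sup>+z. ennreal ((b z)\<^sup>2) \<partial>lborel) * ennreal m"
    by (rule nn_integral_multc) measurable
  also have "\<dots> \<le> ennreal m"
    using assms(1) mult_right_mono[of _ 1 "ennreal m"] by (simp add: nonneg_L2_ball_def)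
  finally show ?thesis .
qed

lemma nn_integral_tensor_sq_le_1:
  fixes b c :: "'a::euclidean_space \<Rightarrow> real"
  assumes b: "nonneg_L2_ball b" and c: "nonneg_L2_ball c"
  shows "(\<integral>\<^sup>+p. ennreal ((b (fst p) * c (snd p))\<^sup>2) \<partial>(lborel \<Otimes>\<^sub>M lborel)) \<le> 1"
proof -
  have [measurable]: "b \<in> borel_measurable borel" "c \<in> borel_measurable borel"
    using b c by (simp_all add: nonneg_L2_ball_def)
  have "(\<integral>\<^sup>+p. ennreal ((b (fst p) * c (snd p))\<^sup>2) \<partial>(lborel \<Otimes>\<^sub>M lborel))
      = (\<integral>\<^sup>+x. \<integral>\<^sup>+y. ennreal ((b x * c y)\<^sup>2) \<partial>lborel \<partial>lborel)"
    by (simp add: lborel.nn_integral_fst[where f="\<lambda>p. ennreal ((b (fst p) * c (snd p))\<^sup>2)", symmetric])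
  also have "\<dots> = (\<integral>\<^sup>+x. ennreal ((b x)\<^sup>2) \<partial>lborel) * (\<integral>\<^sup>+y. ennreal ((c y)\<^sup>2) \<partial>lborel)"
    by (simp add: power_mult_distrib ennreal_mult nn_integral_cmult nn_integral_multc)
  also have "\<dots> \<le> 1 * 1"
    using b c by (intro mult_mono) (auto simp: nonneg_L2_ball_def)
  finally show ?thesis
    by simp
qed

text \<open>Cauchy-Schwarz after splitting the integrand as \<open>(b(x) c(y)) \<cdot> a(x - y)\<close>: by Fubini the second factor
  has squared \<open>L\<^sup>2\<close> norm at most the largest fibre measure over \<open>x - y\<close>.\<close>
lemma convolution_pairing_le_fiber_diff:
  fixes a b c :: "'a::euclidean_space \<Rightarrow> real"
  assumes a: "nonneg_L2_ball a" and b: "nonneg_L2_ball b" and c: "nonneg_L2_ball c"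
    and [measurable]: "Sb \<in> sets borel" "Sc \<in> sets borel"
    and supp: "\<And>z. z \<notin> Sa \<Longrightarrow> a z = 0" "\<And>z. z \<notin> Sb \<Longrightarrow> b z = 0" "\<And>z. z \<notin> Sc \<Longrightarrow> c z = 0"
    and fiber: "\<And>z. z \<in> Sa \<Longrightarrow> emeasure lborel {w. z + w \<in> Sb \<and> w \<in> Sc} \<le> ennreal m"
    and m: "m > 0"
  shows "convolution_pairing a b c \<le> ennreal (sqrt m)"
proof -
  have [measurable]: "a \<in> borel_measurable borel" "b \<in> borel_measurable borel" "c \<in> borel_measurable borel"
    using a b c by (simp_all add: nonneg_L2_ball_def)
  define A where "A p = b (fst p) * c (snd p)" for p :: "'a \<times> 'a"
  define B where "B p = (if fst p \<in> Sb \<and> snd p \<in> Sc then a (fst p - snd p) else 0)" for p :: "'a \<times> 'a"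
  define E where "E z = {w. z + w \<in> Sb \<and> w \<in> Sc}" for z
  have [measurable]: "A \<in> borel_measurable (lborel \<Otimes>\<^sub>M lborel)" "B \<in> borel_measurable (lborel \<Otimes>\<^sub>M lborel)"
    unfolding A_def B_def by measurable
  have A_le: "(\<integral>\<^sup>+p. ennreal ((A p)\<^sup>2) \<partial>(lborel \<Otimes>\<^sub>M lborel)) \<le> 1"
    unfolding A_def using b c by (rule nn_integral_tensor_sq_le_1)
  have "(\<integral>\<^sup>+p. ennreal ((B p)\<^sup>2) \<partial>(lborel \<Otimes>\<^sub>M lborel)) = (\<integral>\<^sup>+y. \<integral>\<^sup>+x. ennreal ((B (x, y))\<^sup>2) \<partial>lborel \<partial>lborel)"
    by (rule lborel_pair.nn_integral_snd[symmetric]) measurable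
  also have "\<dots> = (\<integral>\<^sup>+y. \<integral>\<^sup>+z. ennreal ((B (y + z, y))\<^sup>2) \<partial>lborel \<partial>lborel)"
    by (intro nn_integral_cong nn_integral_lborel_translate[symmetric]) measurable
  also have "\<dots> = (\<integral>\<^sup>+y. \<integral>\<^sup>+z. ennreal ((a z)\<^sup>2) * indicator (E z) y \<partial>lborel \<partial>lborel)"
    by (intro nn_integral_cong) (auto simp: B_def E_def indicator_def add.commute)
  also have "\<dots> = (\<integral>\<^sup>+z. \<integral>\<^sup>+y. ennreal ((a z)\<^sup>2) * indicator (E z) y \<partial>lborel \<partial>lborel)"
  proof (rule lborel_pair.Fubini')
    have "(\<lambda>p. ennreal ((a (fst p))\<^sup>2) * indicator {p. fst p + snd p \<in> Sb \<and> snd p \<in> Sc} p)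
        \<in> borel_measurable (lborel \<Otimes>\<^sub>M lborel)"
      by measurable
    then show "(\<lambda>(z, y). ennreal ((a z)\<^sup>2) * indicator (E z) y) \<in> borel_measurable (lborel \<Otimes>\<^sub>M lborel)"
      by (simp add: E_def indicator_def split_beta')
  qed
  also have "\<dots> = (\<integral>\<^sup>+z. ennreal ((a z)\<^sup>2) * emeasure lborel (E z) \<partial>lborel)"
    by (intro nn_integral_cong nn_integral_cmult_indicator) (simp add: E_def)
  also have "\<dots> \<le> ennreal m"
    using a supp(1) fiber unfolding E_def by (rule nn_integral_sq_mult_emeasure_le)
  finally have B_le: "(\<integral>\<^sup>+p. ennreal ((B p)\<^sup>2) \<partial>(lborel \<Otimes>\<^sub>M lborel)) \<le> ennreal m" .
  have "a (fst p - snd p) * b (fst p) * c (snd p) = A p * B p" for p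
    unfolding A_def B_def using supp(2)[of "fst p"] supp(3)[of "snd p"] by auto
  then have "convolution_pairing a b c = (\<integral>\<^sup>+p. ennreal (A p * B p) \<partial>(lborel \<Otimes>\<^sub>M lborel))"
    by (simp add: convolution_pairing_def)
  also have "\<dots> \<le> ennreal (sqrt m)"
    using a b c by (intro nn_integral_mult_le_sqrt[OF _ _ _ _ A_le B_le m]) (auto simp: A_def B_def nonneg_L2_ball_def)
  finally show ?thesis .
qed

lemma convolution_pairing_commute:
  fixes a b c :: "'a::euclidean_space \<Rightarrow> real"
  assumes [measurable]: "a \<in> borel_measurable borel" "b \<in> borel_measurable borel" "c \<in> borel_measurable borel"
  shows "convolution_pairing a b c = convolution_pairing c b a"
proof -
  have "convolution_pairing a b c = (\<integral>\<^sup>+x. \<integral>\<^sup>+y. ennreal (a (x - y) * b x * c y) \<partial>lborel \<partial>lborel)"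
    unfolding convolution_pairing_def by (simp add: lborel.nn_integral_fst[where f="\<lambda>p. ennreal (a (fst p - snd p) * b (fst p) * c (snd p))", symmetric])
  also have "\<dots> = (\<integral>\<^sup>+x. \<integral>\<^sup>+y. ennreal (a (x - (x - y)) * b x * c (x - y)) \<partial>lborel \<partial>lborel)"
    by (intro nn_integral_cong nn_integral_lborel_reflect[symmetric]) measurable
  also have "\<dots> = (\<integral>\<^sup>+x. \<integral>\<^sup>+y. ennreal (c (x - y) * b x * a y) \<partial>lborel \<partial>lborel)"
    by (simp add: ac_simps)
  also have "\<dots> = convolution_pairing c b a"
    unfolding convolution_pairing_def by (simp add: lborel.nn_integral_fst[where f="\<lambda>p. ennreal (c (fst p - snd p) * b (fst p) * a (snd p))", symmetric])
  finally show ?thesis .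
qed

text \<open>The substitution \<open>(x, y) \<mapsto> (x - y, -y)\<close>.\<close>
lemma convolution_pairing_swap:
  fixes a b c :: "'a::euclidean_space \<Rightarrow> real"
  assumes [measurable]: "a \<in> borel_measurable borel" "b \<in> borel_measurable borel" "c \<in> borel_measurable borel"
  shows "convolution_pairing a b c = convolution_pairing b a (\<lambda>y. c (- y))"
proof -
  have "convolution_pairing a b c = (\<integral>\<^sup>+y. \<integral>\<^sup>+x. ennreal (a (x - y) * b x * c y) \<partial>lborel \<partial>lborel)"
    unfolding convolution_pairing_def by (simp add: lborel_pair.nn_integral_snd[where f="\<lambda>p. ennreal (a (fst p - snd p) * b (fst p) * c (snd p))", symmetric])
  also have "\<dots> = (\<integral>\<^sup>+y. \<integral>\<^sup>+x. ennreal (a ((y + x) - y) * b (y + x) * c y) \<partial>lborel \<partial>lborel)"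
    by (intro nn_integral_cong nn_integral_lborel_translate[symmetric]) measurable
  also have "\<dots> = (\<integral>\<^sup>+x. \<integral>\<^sup>+y. ennreal (b (x - (0 - y)) * a x * c (- (0 - y))) \<partial>lborel \<partial>lborel)"
    by (subst lborel_pair.Fubini') (simp_all add: ac_simps)
  also have "\<dots> = (\<integral>\<^sup>+x. \<integral>\<^sup>+y. ennreal (b (x - y) * a x * c (- y)) \<partial>lborel \<partial>lborel)"
    by (intro nn_integral_cong nn_integral_lborel_reflect) measurable
  also have "\<dots> = convolution_pairing b a (\<lambda>y. c (- y))"
    unfolding convolution_pairing_def by (simp add: lborel.nn_integral_fst[where f="\<lambda>p. ennreal (b (fst p - snd p) * a (fst p) * c (- snd p))", symmetric])
  finally show ?thesis .
qed

lemma convolution_pairing_le_fiber_fst: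
  fixes a b c :: "'a::euclidean_space \<Rightarrow> real"
  assumes a: "nonneg_L2_ball a" and b: "nonneg_L2_ball b" and c: "nonneg_L2_ball c"
    and sets [measurable]: "Sa \<in> sets borel" "Sc \<in> sets borel"
    and supp: "\<And>z. z \<notin> Sa \<Longrightarrow> a z = 0" "\<And>z. z \<notin> Sb \<Longrightarrow> b z = 0" "\<And>z. z \<notin> Sc \<Longrightarrow> c z = 0"
    and fiber: "\<And>z. z \<in> Sb \<Longrightarrow> emeasure lborel {w. z - w \<in> Sa \<and> w \<in> Sc} \<le> ennreal m"
    and m: "m > 0"
  shows "convolution_pairing a b c \<le> ennreal (sqrt m)"
proof -
  have [measurable]: "a \<in> borel_measurable borel" "b \<in> borel_measurable borel" "c \<in> borel_measurable borel"
    using a b c by (simp_all add: nonneg_L2_ball_def)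
  have c': "nonneg_L2_ball (\<lambda>y. c (- y))"
    using c nn_integral_lborel_reflect[of "\<lambda>y. ennreal ((c y)\<^sup>2)" 0] by (simp add: nonneg_L2_ball_def)
  have fiber': "emeasure lborel {w. z + w \<in> Sa \<and> w \<in> uminus -` Sc} \<le> ennreal m" if "z \<in> Sb" for z
  proof -
    have "emeasure lborel {w. z + w \<in> Sa \<and> w \<in> uminus -` Sc}
        = emeasure lborel ((\<lambda>w. 0 - w) -` {w. z - w \<in> Sa \<and> w \<in> Sc})"
      by (rule arg_cong[where f="emeasure lborel"]) auto
    also have "\<dots> = emeasure lborel {w. z - w \<in> Sa \<and> w \<in> Sc}"
      by (rule emeasure_lborel_reflect) measurable
    finally show ?thesis
      using fiber[OF that] by simp
  qed
  have Sc': "uminus -` Sc \<in> sets borel"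
    using measurable_sets_borel[of uminus borel Sc] by simp
  have supp_c': "\<And>z. z \<notin> uminus -` Sc \<Longrightarrow> c (- z) = 0"
    using supp(3) by simp
  have "convolution_pairing b a (\<lambda>y. c (- y)) \<le> ennreal (sqrt m)"
    by (rule convolution_pairing_le_fiber_diff[OF b a c' sets(1) Sc' supp(2,1) supp_c' fiber' m])
  with a b c show ?thesis
    by (simp add: convolution_pairing_swap[of a b c] nonneg_L2_ball_def)
qed

lemma convolution_pairing_le_fiber_snd:
  fixes a b c :: "'a::euclidean_space \<Rightarrow> real"
  assumes a: "nonneg_L2_ball a" and b: "nonneg_L2_ball b" and c: "nonneg_L2_ball c"
    and sets [measurable]: "Sa \<in> sets borel" "Sb \<in> sets borel"
    and supp: "\<And>z. z \<notin> Sa \<Longrightarrow> a z = 0" "\<And>z. z \<notin> Sb \<Longrightarrow> b z = 0" "\<And>z. z \<notin> Sc \<Longrightarrow> c z = 0"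
    and fiber: "\<And>z. z \<in> Sc \<Longrightarrow> emeasure lborel {w. w - z \<in> Sa \<and> w \<in> Sb} \<le> ennreal m"
    and m: "m > 0"
  shows "convolution_pairing a b c \<le> ennreal (sqrt m)"
proof -
  have "emeasure lborel {w. z + w \<in> Sb \<and> w \<in> Sa} \<le> ennreal m" if "z \<in> Sc" for z
  proof -
    have "emeasure lborel {w. z + w \<in> Sb \<and> w \<in> Sa} = emeasure lborel ((+) z -` {w. w - z \<in> Sa \<and> w \<in> Sb})"
      by (rule arg_cong[where f="emeasure lborel"]) auto
    also have "\<dots> = emeasure lborel {w. w - z \<in> Sa \<and> w \<in> Sb}"
      by (rule emeasure_lborel_translate) measurable
    finally show ?thesis
      using fiber[OF that] by simp
  qed
  then have "convolution_pairing c b a \<le> ennreal (sqrt m)"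
    by (intro convolution_pairing_le_fiber_diff[OF c b a sets(2,1) supp(3,2,1) _ m])
  with a b c show ?thesis
    by (simp add: convolution_pairing_commute[of a b c] nonneg_L2_ball_def)
qed

lemma norm_integral_le_convolution_pairing:
  fixes f g h :: "'a::euclidean_space \<Rightarrow> 'b::{real_normed_field, second_countable_topology, banach}"
  assumes [measurable]: "f \<in> borel_measurable borel" "g \<in> borel_measurable borel" "h \<in> borel_measurable borel"
  shows "norm (\<integral>p. f (fst p - snd p) * g (fst p) * h (snd p) \<partial>(lborel \<Otimes>\<^sub>M lborel))
         \<le> enn2real (convolution_pairing (\<lambda>z. norm (f z)) (\<lambda>z. norm (g z)) (\<lambda>z. norm (h z)))"
proof -
  have "norm (\<integral>p. f (fst p - snd p) * g (fst p) * h (snd p) \<partial>(lborel \<Otimes>\<^sub>M lborel))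
      \<le> (\<integral>p. norm (f (fst p - snd p) * g (fst p) * h (snd p)) \<partial>(lborel \<Otimes>\<^sub>M lborel))"
    by (rule integral_norm_bound)
  also have "\<dots> = enn2real (\<integral>\<^sup>+p. ennreal (norm (f (fst p - snd p) * g (fst p) * h (snd p))) \<partial>(lborel \<Otimes>\<^sub>M lborel))"
    by (rule integral_eq_nn_integral) auto
  finally show ?thesis
    by (simp add: convolution_pairing_def norm_mult)
qed

section \<open>Thin sets in the plane\<close>

text \<open>For a unit vector \<open>(c, s)\<close>, \<open>perp c s x\<close> is the signed distance of \<open>x\<close> from the line \<open>\<real>(c, s)\<close>.\<close>
definition perp :: "real \<Rightarrow> real \<Rightarrow> real \<times> real \<Rightarrow> real" where
  "perp c s x = snd x * c - fst x * s"

lemma perp_rotation: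
  assumes "c\<^sup>2 + s\<^sup>2 = 1"
  shows "perp c s (c * u - s * v, s * u + c * v) = v"
proof -
  have "(s * u + c * v) * c - (c * u - s * v) * s = v * (c\<^sup>2 + s\<^sup>2)"
    by (simp add: algebra_simps power2_eq_square)
  with assms show ?thesis
    by (simp add: perp_def)
qed

lemma emeasure_lborel_le_diameter:
  fixes Y :: "real set"
  assumes "d \<ge> 0" and "\<And>u u'. u \<in> Y \<Longrightarrow> u' \<in> Y \<Longrightarrow> \<bar>u - u'\<bar> \<le> d"
  shows "emeasure lborel Y \<le> ennreal (2 * d)"
proof (cases "Y = {}")
  case False
  then obtain u0 where "u0 \<in> Y"
    by auto
  then have "Y \<subseteq> {u0 - d .. u0 + d}"
    using assms(2) by (force simp: abs_le_iff)
  then have "emeasure lborel Y \<le> emeasure lborel {u0 - d .. u0 + d}"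
    by (rule emeasure_mono) simp
  with assms(1) show ?thesis
    by simp
qed simp

lemma emeasure_lborel_le_diameter_halves:
  fixes X :: "real set"
  assumes [measurable]: "X \<in> sets borel" and "d \<ge> 0"
    and "\<And>u u'. u \<in> X \<Longrightarrow> u' \<in> X \<Longrightarrow> (0 < u \<longleftrightarrow> 0 < u') \<Longrightarrow> \<bar>u - u'\<bar> \<le> d"
  shows "emeasure lborel X \<le> ennreal (4 * d)"
proof -
  have "emeasure lborel X \<le> emeasure lborel (X \<inter> {0<..}) + emeasure lborel (X \<inter> {..0})"
    by (rule order_trans[OF emeasure_mono emeasure_subadditive]) auto
  also have "\<dots> \<le> ennreal (2 * d) + ennreal (2 * d)"
    using assms(2,3) by (intro add_mono emeasure_lborel_le_diameter) (auto simp: not_less[symmetric])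
  also have "\<dots> = ennreal (4 * d)"
    using assms(2) by (simp flip: ennreal_plus)
  finally show ?thesis .
qed

lemma emeasure_strip_le:
  fixes P :: "(real \<times> real) set"
  assumes cs: "c\<^sup>2 + s\<^sup>2 = 1" and [measurable]: "P \<in> sets borel" and "d \<ge> 0" and "w \<ge> 0"
    and strip: "\<And>x. x \<in> P \<Longrightarrow> \<bar>perp c s x\<bar> \<le> w"
    and halves: "\<And>u u' v. (c * u - s * v, s * u + c * v) \<in> P \<Longrightarrow> (c * u' - s * v, s * u' + c * v) \<in> P
                 \<Longrightarrow> (0 < u \<longleftrightarrow> 0 < u') \<Longrightarrow> \<bar>u - u'\<bar> \<le> d"
  shows "emeasure lborel P \<le> ennreal (8 * w * d)"
proof -
  define R where "R = (\<lambda>(u, v). (c * u - s * v, s * u + c * v :: real))"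
  have [measurable]: "R \<in> borel_measurable borel"
    using borel_measurable_linear_plane[of c "-s" s c] by (simp add: R_def)
  have RP: "R -` P \<in> sets (lborel \<Otimes>\<^sub>M lborel)"
    using measurable_sets_borel[of R borel P] unfolding lborel_prod by simp
  have "emeasure lborel P = emeasure (distr lborel borel R) P"
    by (simp add: R_def lborel_distr_rotation[OF cs])
  also have "\<dots> = emeasure (lborel \<Otimes>\<^sub>M lborel) (R -` P)"
    by (simp add: emeasure_distr lborel_prod)
  also have "\<dots> = (\<integral>\<^sup>+v. emeasure lborel ((\<lambda>u. (u, v)) -` R -` P) \<partial>lborel)"
    by (rule lborel_pair.emeasure_pair_measure_alt2[OF RP])
  also have "\<dots> \<le> (\<integral>\<^sup>+v. ennreal (4 * d) * indicator {-w..w} v \<partial>lborel)"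
  proof (intro nn_integral_mono)
    fix v :: real
    show "emeasure lborel ((\<lambda>u. (u, v)) -` R -` P) \<le> ennreal (4 * d) * indicator {-w..w} v"
    proof (cases "\<bar>v\<bar> \<le> w")
      case True
      have "(\<lambda>u. (u, v)) -` R -` P \<in> sets borel"
        using sets_Pair2[OF RP] by simp
      then have "emeasure lborel ((\<lambda>u. (u, v)) -` R -` P) \<le> ennreal (4 * d)"
        using \<open>d \<ge> 0\<close> by (rule emeasure_lborel_le_diameter_halves) (auto simp: R_def intro: halves)
      with True show ?thesis
        by (simp add: indicator_def abs_le_iff)
    next
      case False
      then have "(\<lambda>u. (u, v)) -` R -` P = {}"
        using strip perp_rotation[OF cs] by (force simp: R_def)
      then show ?thesis
        by simp
    qed
  qed
  also have "\<dots> = ennreal (4 * d) * emeasure lborel {-w..w}"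
    by (rule nn_integral_cmult_indicator) simp
  also have "\<dots> = ennreal (8 * w * d)"
    using assms(3,4) by (simp add: ennreal_mult[symmetric] algebra_simps)
  finally show ?thesis .
qed

lemma emeasure_le_fiber_diameter:
  fixes E :: "('a::euclidean_space \<times> real) set"
  assumes "E \<in> sets borel" and "P \<in> sets borel" and "l \<ge> 0" and P: "emeasure lborel P \<le> ennreal B"
    and proj: "\<And>x t. (x, t) \<in> E \<Longrightarrow> x \<in> P"
    and fiber: "\<And>x t t'. (x, t) \<in> E \<Longrightarrow> (x, t') \<in> E \<Longrightarrow> \<bar>t - t'\<bar> \<le> l"
  shows "emeasure lborel E \<le> ennreal (2 * l * B)"
proof -
  have E: "E \<in> sets (lborel \<Otimes>\<^sub>M lborel)"
    using assms(1) unfolding lborel_prod by simp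
  have "emeasure lborel E = (\<integral>\<^sup>+x. emeasure lborel (Pair x -` E) \<partial>lborel)"
    using lborel.emeasure_pair_measure_alt[OF E] by (simp add: lborel_prod)
  also have "\<dots> \<le> (\<integral>\<^sup>+x. ennreal (2 * l) * indicator P x \<partial>lborel)"
  proof (intro nn_integral_mono)
    fix x
    show "emeasure lborel (Pair x -` E) \<le> ennreal (2 * l) * indicator P x"
    proof (cases "x \<in> P")
      case True
      have "emeasure lborel (Pair x -` E) \<le> ennreal (2 * l)"
        using assms(3) fiber by (intro emeasure_lborel_le_diameter) auto
      with True show ?thesis
        by simp
    next
      case False
      then have "Pair x -` E = {}"
        using proj by auto
      then show ?thesis
        by simp
    qed
  qed
  also have "\<dots> = ennreal (2 * l) * emeasure lborel P"
    using assms(2) by (simp add: nn_integral_cmult_indicator)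
  also have "\<dots> \<le> ennreal (2 * l) * ennreal B"
    using P by (rule mult_left_mono) simp
  also have "\<dots> = ennreal (2 * l * B)"
    using assms(3) by (simp add: ennreal_mult')
  finally show ?thesis .
qed

lemma rotation_coordinates:
  fixes c s u v :: real
  assumes "c\<^sup>2 + s\<^sup>2 = 1"
  shows "(norm (c * u - s * v, s * u + c * v))\<^sup>2 = u\<^sup>2 + v\<^sup>2"
    and "\<xi> \<bullet> (c * u - s * v, s * u + c * v) = u * (fst \<xi> * c + snd \<xi> * s) + v * perp c s \<xi>"
proof -
  have "(c * u - s * v)\<^sup>2 + (s * u + c * v)\<^sup>2 = (u\<^sup>2 + v\<^sup>2) * (c\<^sup>2 + s\<^sup>2)"
    by (simp add: algebra_simps power2_eq_square)
  with assms show "(norm (c * u - s * v, s * u + c * v))\<^sup>2 = u\<^sup>2 + v\<^sup>2"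
    by (simp add: norm_Pair)
  show "\<xi> \<bullet> (c * u - s * v, s * u + c * v) = u * (fst \<xi> * c + snd \<xi> * s) + v * perp c s \<xi>"
    by (cases \<xi>) (simp add: inner_Pair perp_def algebra_simps)
qed

lemma norm_sq_eq_along_perp:
  assumes "c\<^sup>2 + s\<^sup>2 = 1"
  shows "(norm x)\<^sup>2 = (fst x * c + snd x * s)\<^sup>2 + (perp c s x)\<^sup>2"
proof -
  have "(fst x * c + snd x * s)\<^sup>2 + (perp c s x)\<^sup>2 = ((fst x)\<^sup>2 + (snd x)\<^sup>2) * (c\<^sup>2 + s\<^sup>2)"
    by (simp add: perp_def algebra_simps power2_eq_square)
  with assms show ?thesis
    by (cases x) (simp add: norm_Pair)
qed

lemma le_abs_of_sq_le: "0 \<le> r \<Longrightarrow> r\<^sup>2 \<le> x\<^sup>2 \<Longrightarrow> r \<le> \<bar>x :: real\<bar>"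
  by (metis abs_ge_zero power2_abs power2_le_imp_le)

lemma abs_along_ge_of_norm_ge:
  assumes cs: "c\<^sup>2 + s\<^sup>2 = 1" and "\<bar>v\<bar> \<le> w" "8 * w \<le> R" "R / 2 \<le> norm (c * x - s * v, s * x + c * v)"
  shows "R / 4 \<le> \<bar>x\<bar>"
proof -
  have R: "0 \<le> R"
    using assms(2,3) by linarith
  have "R\<^sup>2 \<le> 4 * x\<^sup>2 + 4 * v\<^sup>2"
    using assms R power_mono[of "R / 2" "norm (c * x - s * v, s * x + c * v)" 2]
    by (simp add: rotation_coordinates(1)[OF cs] power_divide)
  moreover have "v\<^sup>2 \<le> w\<^sup>2" "64 * w\<^sup>2 \<le> R\<^sup>2"
    using assms power_mono[of "\<bar>v\<bar>" w 2] power_mono[of "8 * w" R 2] by simp_all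
  ultimately have "R\<^sup>2 \<le> 16 * x\<^sup>2"
    using zero_le_power2[of x] by linarith
  then have "(R / 4)\<^sup>2 \<le> x\<^sup>2"
    by (simp add: power_divide)
  then show ?thesis
    using R by (intro le_abs_of_sq_le) auto
qed

lemma norm_rotation_diff:
  assumes "c\<^sup>2 + s\<^sup>2 = 1"
  shows "norm ((c * u - s * v, s * u + c * v) - (c * u' - s * v, s * u' + c * v)) = \<bar>u - u'\<bar>"
proof -
  have "(c * u - s * v, s * u + c * v) - (c * u' - s * v, s * u' + c * v) = (u - u') *\<^sub>R (c, s)"
    by (simp add: algebra_simps)
  moreover have "norm (c, s) = 1"
    using assms by (simp add: norm_Pair)
  ultimately show ?thesis
    by (simp only: norm_scaleR real_norm_def mult_1_right)
qed

lemma closed_strip_slab: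
  "closed {\<eta>. \<bar>perp c s \<eta>\<bar> \<le> w \<and> \<bar>perp c s (\<xi> + \<eta>)\<bar> \<le> w \<and> \<bar>t + 2 * (\<xi> \<bullet> \<eta>)\<bar> \<le> \<delta>}"
  unfolding perp_def by (intro closed_Collect_conj closed_Collect_le continuous_intros)

lemma emeasure_strip_slab_le:
  fixes \<xi> :: "real \<times> real"
  assumes cs: "c\<^sup>2 + s\<^sup>2 = 1" and "w \<ge> 0" "\<delta> \<ge> 0" "R > 0" "8 * w \<le> R" "R \<le> norm \<xi>"
  shows "emeasure lborel {\<eta>. \<bar>perp c s \<eta>\<bar> \<le> w \<and> \<bar>perp c s (\<xi> + \<eta>)\<bar> \<le> w \<and> \<bar>t + 2 * (\<xi> \<bullet> \<eta>)\<bar> \<le> \<delta>}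
         \<le> ennreal (16 * w * \<delta> / R)"
    (is "emeasure lborel ?P \<le> _")
proof -
  have "emeasure lborel ?P \<le> ennreal (8 * w * (2 * \<delta> / R))"
  proof (rule emeasure_strip_le[OF cs])
    show "?P \<in> sets borel"
      by (intro borel_closed closed_strip_slab)
    show "0 \<le> 2 * \<delta> / R" "0 \<le> w"
      using assms by simp_all
    show "\<bar>perp c s x\<bar> \<le> w" if "x \<in> ?P" for x
      using that by simp
    fix u u' v
    assume in_P: "(c * u - s * v, s * u + c * v) \<in> ?P" "(c * u' - s * v, s * u' + c * v) \<in> ?P"
    define r where "r = fst \<xi> * c + snd \<xi> * s"
    text \<open>Both \<open>\<eta>\<close> and \<open>\<xi> + \<eta>\<close> lie in the strip, so \<open>\<xi>\<close> is nearly parallel to it and the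
      slab \<open>|t + 2 \<xi>\<cdot>\<eta>| \<le> \<delta>\<close> cuts each line of the strip transversally.\<close>
    have "perp c s \<xi> = perp c s (\<xi> + (c * u - s * v, s * u + c * v)) - perp c s (c * u - s * v, s * u + c * v)"
      by (simp add: perp_def algebra_simps)
    then have "\<bar>perp c s \<xi>\<bar> \<le> 2 * w"
      using in_P(1) by auto
    then have "(perp c s \<xi>)\<^sup>2 \<le> 4 * w\<^sup>2"
      using power_mono[of "\<bar>perp c s \<xi>\<bar>" "2 * w" 2] by simp
    moreover have "R\<^sup>2 \<le> r\<^sup>2 + (perp c s \<xi>)\<^sup>2"
      using power_mono[of R "norm \<xi>" 2] assms norm_sq_eq_along_perp[OF cs, of \<xi>] by (simp add: r_def)
    moreover have "64 * w\<^sup>2 \<le> R\<^sup>2"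
      using power_mono[of "8 * w" R 2] assms by simp
    ultimately have "R\<^sup>2 \<le> 4 * r\<^sup>2"
      using zero_le_power2[of r] by linarith
    then have "(R / 2)\<^sup>2 \<le> r\<^sup>2"
      by (simp add: power_divide)
    then have r: "R / 2 \<le> \<bar>r\<bar>"
      using assms by (intro le_abs_of_sq_le) auto
    have "\<xi> \<bullet> (c * u - s * v, s * u + c * v) - \<xi> \<bullet> (c * u' - s * v, s * u' + c * v) = (u - u') * r"
      unfolding rotation_coordinates(2)[OF cs] r_def by (simp add: algebra_simps)
    with in_P have "\<bar>(u - u') * r\<bar> \<le> \<delta>"
      by simp arith
    moreover have "\<bar>u - u'\<bar> * (R / 2) \<le> \<bar>u - u'\<bar> * \<bar>r\<bar>"
      using r by (intro mult_left_mono) auto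
    ultimately have "\<bar>u - u'\<bar> * (R / 2) \<le> \<delta>"
      by (simp add: abs_mult)
    then show "\<bar>u - u'\<bar> \<le> 2 * \<delta> / R"
      using assms by (simp add: field_simps)
  qed
  then show ?thesis
    by (simp add: mult.assoc)
qed

lemma emeasure_strip_curved_slab_le:
  fixes p :: "real \<times> real"
  assumes cs: "c\<^sup>2 + s\<^sup>2 = 1" and "w \<ge> 0" "\<delta> \<ge> 0" "R \<ge> 8" "8 * w \<le> R" "\<bar>\<sigma>\<bar> \<le> 1"
  shows "emeasure lborel {\<eta>. \<bar>perp c s \<eta>\<bar> \<le> w \<and> R / 2 \<le> norm \<eta> \<and> \<bar>t + (norm \<eta>)\<^sup>2 + \<sigma> * norm (p - \<eta>)\<bar> \<le> \<delta>}
         \<le> ennreal (64 * w * \<delta> / R)"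
    (is "emeasure lborel ?P \<le> _")
proof -
  have "emeasure lborel ?P \<le> ennreal (8 * w * (8 * \<delta> / R))"
  proof (rule emeasure_strip_le[OF cs])
    show "?P \<in> sets borel"
      unfolding perp_def by (intro borel_closed closed_Collect_conj closed_Collect_le continuous_intros)
    show "0 \<le> 8 * \<delta> / R" "0 \<le> w"
      using assms by simp_all
    show "\<bar>perp c s x\<bar> \<le> w" if "x \<in> ?P" for x
      using that by simp
    fix u u' v
    assume in_P: "(c * u - s * v, s * u + c * v) \<in> ?P" "(c * u' - s * v, s * u' + c * v) \<in> ?P"
      and same_side: "0 < u \<longleftrightarrow> 0 < u'"
    have v: "\<bar>v\<bar> \<le> w"
      using in_P(1) perp_rotation[OF cs] by simp
    text \<open>Away from the origin the strip meets each circle \<open>|\<eta>| = const\<close> in two short arcs, one on each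
      side; on a line of the strip, \<open>|\<eta>|\<^sup>2\<close> therefore varies with slope \<open>|u + u'| \<ge> R/2\<close>, which the
      \<open>1\<close>-Lipschitz term \<open>\<sigma> |p - \<eta>|\<close> cannot compensate.\<close>
    have far: "R / 4 \<le> \<bar>x\<bar>" if "(c * x - s * v, s * x + c * v) \<in> ?P" for x
      using that v assms(5) by (intro abs_along_ge_of_norm_ge[OF cs]) auto
    have sum: "R / 2 \<le> \<bar>u + u'\<bar>"
      using far[OF in_P(1)] far[OF in_P(2)] same_side assms by (cases "0 < u") auto
    define \<eta> \<eta>' where "\<eta> = (c * u - s * v, s * u + c * v)" and "\<eta>' = (c * u' - s * v, s * u' + c * v)"
    have "(norm \<eta>)\<^sup>2 - (norm \<eta>')\<^sup>2 = (u - u') * (u + u')"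
      unfolding \<eta>_def \<eta>'_def rotation_coordinates(1)[OF cs] by (simp add: algebra_simps power2_eq_square)
    moreover have "\<bar>\<sigma> * norm (p - \<eta>) - \<sigma> * norm (p - \<eta>')\<bar> \<le> \<bar>u - u'\<bar>"
    proof -
      have "norm (\<eta> - \<eta>') = \<bar>u - u'\<bar>"
        unfolding \<eta>_def \<eta>'_def by (rule norm_rotation_diff[OF cs])
      then have "\<bar>norm (p - \<eta>) - norm (p - \<eta>')\<bar> \<le> \<bar>u - u'\<bar>"
        using norm_triangle_ineq3[of "p - \<eta>" "p - \<eta>'"] by (simp add: norm_minus_commute)
      then show ?thesis
        using assms(6) mult_mono[of "\<bar>\<sigma>\<bar>" 1 "\<bar>norm (p - \<eta>) - norm (p - \<eta>')\<bar>" "\<bar>u - u'\<bar>"]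
        by (simp add: abs_mult flip: right_diff_distrib)
    qed
    ultimately have "\<bar>(u - u') * (u + u')\<bar> \<le> 2 * \<delta> + \<bar>u - u'\<bar>"
      using in_P unfolding \<eta>_def[symmetric] \<eta>'_def[symmetric] by simp arith
    then have "\<bar>u - u'\<bar> * \<bar>u + u'\<bar> \<le> 2 * \<delta> + \<bar>u - u'\<bar>"
      by (simp only: abs_mult)
    moreover have "\<bar>u - u'\<bar> * R \<le> 2 * (\<bar>u - u'\<bar> * \<bar>u + u'\<bar>)"
      using mult_left_mono[OF sum abs_ge_zero, of "u - u'"] by simp
    ultimately have "\<bar>u - u'\<bar> * R \<le> 8 * \<delta>"
      using assms(3) mult_left_mono[OF assms(4) abs_ge_zero, of "u - u'"] by (smt (verit))
    then show "\<bar>u - u'\<bar> \<le> 8 * \<delta> / R"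
      using assms by (simp add: field_simps)
  qed
  then show ?thesis
    by (simp add: mult.assoc)
qed

section \<open>Sectors, supports and fibres\<close>

lemma xnorm_eq_norm: "xnorm = norm"
  by (auto simp: fun_eq_iff xnorm_def norm_Pair)

lemma abs_sin_diff_le_Theta:
  assumes "\<theta> \<in> Theta A j" and "A > 0" and "\<bar>int j - int j'\<bar> \<le> 16"
  shows "\<bar>sin (\<theta> - pi * real j' / real A)\<bar> \<le> 18 * pi / real A"
proof -
  define \<phi> where "\<phi> = pi * real j' / real A"
  have j: "\<bar>real j - real j'\<bar> \<le> 16"
    using assms(3) by linarith
  have near: "\<bar>sin (x - \<phi>)\<bar> \<le> 18 * pi / real A"
    if "pi / real A * (real j - 2) \<le> x" "x \<le> pi / real A * (real j + 2)" for x
  proof -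
    have "x - \<phi> \<le> pi / real A * (real j - real j' + 2)" "\<phi> - x \<le> pi / real A * (real j' - real j + 2)"
      using that by (simp_all add: \<phi>_def algebra_simps)
    moreover have "pi / real A * (real j - real j' + 2) \<le> pi / real A * 18"
      "pi / real A * (real j' - real j + 2) \<le> pi / real A * 18"
      using j assms(2) by (intro mult_left_mono; simp)+
    ultimately have "\<bar>x - \<phi>\<bar> \<le> pi / real A * 18"
      by (simp only: abs_le_iff) linarith
    then show ?thesis
      using abs_sin_x_le_abs_x[of "x - \<phi>"] by (simp add: mult.commute)
  qed
  from assms(1) consider "pi / real A * (real j - 2) \<le> \<theta> \<and> \<theta> \<le> pi / real A * (real j + 2)"
    | "pi / real A * (real j - 2) \<le> \<theta> + pi \<and> \<theta> + pi \<le> pi / real A * (real j + 2)"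
    unfolding Theta_def by fastforce
  then show ?thesis
  proof cases
    case 2
    then have "\<bar>sin (\<theta> + pi - \<phi>)\<bar> \<le> 18 * pi / real A"
      using near by simp
    moreover have "sin (\<theta> + pi - \<phi>) = - sin (\<theta> - \<phi>)"
      using sin_periodic_pi[of "\<theta> - \<phi>"] by (simp add: algebra_simps)
    ultimately show ?thesis
      by (simp add: \<phi>_def)
  qed (use near in \<open>simp add: \<phi>_def\<close>)
qed

lemma perp_QQ_le:
  assumes "z \<in> QQ A j" and "A > 0" and "\<bar>int j - int j'\<bar> \<le> 16"
  shows "\<bar>perp (cos (pi * real j' / real A)) (sin (pi * real j' / real A)) (fst z)\<bar>
           \<le> norm (fst z) * (18 * pi / real A)"
proof -
  obtain \<theta> where \<theta>: "\<theta> \<in> Theta A j"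
    and polar: "fst (fst z) = norm (fst z) * cos \<theta>" "snd (fst z) = norm (fst z) * sin \<theta>"
    using assms(1) by (auto simp: QQ_def xnorm_eq_norm)
  have "perp (cos (pi * real j' / real A)) (sin (pi * real j' / real A)) (fst z)
      = norm (fst z) * sin (\<theta> - pi * real j' / real A)"
    by (simp add: perp_def polar sin_diff algebra_simps)
  then have "\<bar>perp (cos (pi * real j' / real A)) (sin (pi * real j' / real A)) (fst z)\<bar>
      = norm (fst z) * \<bar>sin (\<theta> - pi * real j' / real A)\<bar>"
    by (simp add: abs_mult)
  also have "\<dots> \<le> norm (fst z) * (18 * pi / real A)"
    using abs_sin_diff_le_Theta[OF \<theta> assms(2,3)] by (rule mult_left_mono) simp
  finally show ?thesis .
qed

text \<open>Closed relaxations of \<open>PP N \<inter> WW \<sigma> L\<close> and \<open>QQ A j \<inter> PP N \<inter> SS L\<close>: the lower modulation bounds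
  are dropped and the angular sector is replaced by a strip of width \<open>2w\<close>.\<close>
definition wave_shell :: "real \<Rightarrow> real \<Rightarrow> real \<Rightarrow> pt set" where
  "wave_shell \<sigma> N L = {z. N / 2 \<le> norm (fst z) \<and> norm (fst z) \<le> 2 * N \<and> \<bar>snd z + \<sigma> * norm (fst z)\<bar> \<le> 2 * L}"

definition paraboloid_strip :: "real \<Rightarrow> real \<Rightarrow> real \<Rightarrow> real \<Rightarrow> real \<Rightarrow> pt set" where
  "paraboloid_strip c s w N L = {z. \<bar>perp c s (fst z)\<bar> \<le> w \<and> N / 2 \<le> norm (fst z) \<and> norm (fst z) \<le> 2 * N
     \<and> \<bar>snd z + (norm (fst z))\<^sup>2\<bar> \<le> 2 * L}"

lemma wave_shell_borel [measurable]: "wave_shell \<sigma> N L \<in> sets borel"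
  unfolding wave_shell_def
  by (intro borel_closed closed_Collect_conj closed_Collect_le continuous_intros)

lemma paraboloid_strip_borel [measurable]: "paraboloid_strip c s w N L \<in> sets borel"
  unfolding paraboloid_strip_def perp_def
  by (intro borel_closed closed_Collect_conj closed_Collect_le continuous_intros)

lemma uminus_in_wave_shell_iff: "- z \<in> wave_shell \<sigma> N L \<longleftrightarrow> z \<in> wave_shell (- \<sigma>) N L"
  by (simp add: wave_shell_def abs_minus_commute[of "snd z"])

lemma PP_WW_subset_wave_shell:
  assumes "N \<noteq> 1"
  shows "PP N \<inter> WW \<sigma> L \<subseteq> wave_shell \<sigma> N L"
  using assms by (auto simp: PP_def WW_def wave_shell_def xnorm_eq_norm split: if_splits)

lemma QQ_PP_SS_subset_paraboloid_strip:
  assumes "N \<noteq> 1" and "A > 0" and "\<bar>int j - int j'\<bar> \<le> 16" and w: "36 * pi * N / real A \<le> w"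
  shows "QQ A j \<inter> PP N \<inter> SS L \<subseteq> paraboloid_strip (cos (pi * real j' / real A)) (sin (pi * real j' / real A)) w N L"
proof
  fix z assume z: "z \<in> QQ A j \<inter> PP N \<inter> SS L"
  then have N: "N / 2 \<le> norm (fst z)" "norm (fst z) \<le> 2 * N"
    using assms(1) by (auto simp: PP_def xnorm_eq_norm)
  have "\<bar>perp (cos (pi * real j' / real A)) (sin (pi * real j' / real A)) (fst z)\<bar> \<le> norm (fst z) * (18 * pi / real A)"
    using z assms(2,3) by (intro perp_QQ_le) auto
  also have "\<dots> \<le> 2 * N * (18 * pi / real A)"
    using N(2) by (rule mult_right_mono) simp
  also have "\<dots> = 36 * pi * N / real A"
    by simp
  also note w
  finally show "z \<in> paraboloid_strip (cos (pi * real j' / real A)) (sin (pi * real j' / real A)) w N L"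
    using z N w by (auto simp: paraboloid_strip_def SS_def xnorm_eq_norm split: if_splits)
qed

lemma min_mult_add_le: "0 \<le> a \<Longrightarrow> 0 \<le> b \<Longrightarrow> min a b * (a + b) \<le> 2 * a * (b :: real)"
  by (cases "a \<le> b") (auto simp: min_def algebra_simps intro: mult_right_mono mult_left_mono)

lemma emeasure_paraboloid_strip_pair_fiber_le:
  fixes z :: pt
  assumes cs: "c\<^sup>2 + s\<^sup>2 = 1" and "w \<ge> 0" "L1 \<ge> 1" "L2 \<ge> 1" "N > 0" "16 * w \<le> N" "N / 2 \<le> norm (fst z)"
  shows "emeasure lborel {v. z + v \<in> paraboloid_strip c s w N1 L1 \<and> v \<in> paraboloid_strip c s w N2 L2}
         \<le> ennreal (1024 * w * L1 * L2 / N)"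
proof -
  obtain \<xi> \<tau> where z: "z = (\<xi>, \<tau>)"
    by (cases z)
  let ?P = "{\<eta>. \<bar>perp c s \<eta>\<bar> \<le> w \<and> \<bar>perp c s (\<xi> + \<eta>)\<bar> \<le> w \<and> \<bar>(\<tau> + (norm \<xi>)\<^sup>2) + 2 * (\<xi> \<bullet> \<eta>)\<bar> \<le> 2 * L1 + 2 * L2}"
  have "emeasure lborel {v. z + v \<in> paraboloid_strip c s w N1 L1 \<and> v \<in> paraboloid_strip c s w N2 L2}
      \<le> ennreal (2 * (4 * min L1 L2) * (16 * w * (2 * L1 + 2 * L2) / (N / 2)))"
    (is "_ \<le> ennreal ?B")
  proof (rule emeasure_le_fiber_diameter)
    show "?P \<in> sets borel"
      by (intro borel_closed closed_strip_slab)
    show "emeasure lborel ?P \<le> ennreal (16 * w * (2 * L1 + 2 * L2) / (N / 2))"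
      using assms by (intro emeasure_strip_slab_le) (auto simp: z)
    fix \<eta> \<sigma> \<sigma>'
    assume in_E: "(\<eta>, \<sigma>) \<in> {v. z + v \<in> paraboloid_strip c s w N1 L1 \<and> v \<in> paraboloid_strip c s w N2 L2}"
      "(\<eta>, \<sigma>') \<in> {v. z + v \<in> paraboloid_strip c s w N1 L1 \<and> v \<in> paraboloid_strip c s w N2 L2}"
    have "(\<tau> + (norm \<xi>)\<^sup>2) + 2 * (\<xi> \<bullet> \<eta>) = (\<tau> + \<sigma> + (norm (\<xi> + \<eta>))\<^sup>2) - (\<sigma> + (norm \<eta>)\<^sup>2)"
      by (simp add: power2_norm_eq_inner inner_add algebra_simps inner_commute)
    with in_E(1) show "\<eta> \<in> ?P"
      by (auto simp: z paraboloid_strip_def)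
    show "\<bar>\<sigma> - \<sigma>'\<bar> \<le> 4 * min L1 L2"
      using in_E by (auto simp: z paraboloid_strip_def min_def)
  qed (use assms in simp_all)
  moreover have "?B \<le> 1024 * w * L1 * L2 / N"
  proof -
    have "?B = 512 * w * (min L1 L2 * (L1 + L2)) / N"
      by (simp add: field_simps)
    also have "\<dots> \<le> 512 * w * (2 * L1 * L2) / N"
      using assms min_mult_add_le[of L1 L2] by (intro divide_right_mono mult_left_mono) auto
    finally show ?thesis
      by simp
  qed
  ultimately show ?thesis
    by (meson ennreal_leI order_trans)
qed

lemma emeasure_wave_paraboloid_fiber_le:
  fixes z :: pt
  assumes cs: "c\<^sup>2 + s\<^sup>2 = 1" and "w \<ge> 0" "L \<ge> 1" "L2 \<ge> 1" "8 \<le> N2" "8 * w \<le> N2" "\<bar>\<sigma>\<bar> \<le> 1"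
  shows "emeasure lborel {v. z - v \<in> wave_shell \<sigma> N L \<and> v \<in> paraboloid_strip c s w N2 L2}
         \<le> ennreal (2048 * w * L * L2 / N2)"
proof -
  obtain \<xi> \<tau> where z: "z = (\<xi>, \<tau>)"
    by (cases z)
  let ?P = "{\<eta>. \<bar>perp c s \<eta>\<bar> \<le> w \<and> N2 / 2 \<le> norm \<eta> \<and> \<bar>\<tau> + (norm \<eta>)\<^sup>2 + \<sigma> * norm (\<xi> - \<eta>)\<bar> \<le> 2 * L + 2 * L2}"
  have "emeasure lborel {v. z - v \<in> wave_shell \<sigma> N L \<and> v \<in> paraboloid_strip c s w N2 L2}
      \<le> ennreal (2 * (4 * min L L2) * (64 * w * (2 * L + 2 * L2) / N2))"
    (is "_ \<le> ennreal ?B")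
  proof (rule emeasure_le_fiber_diameter)
    show "?P \<in> sets borel"
      unfolding perp_def by (intro borel_closed closed_Collect_conj closed_Collect_le continuous_intros)
    show "emeasure lborel ?P \<le> ennreal (64 * w * (2 * L + 2 * L2) / N2)"
      using assms by (intro emeasure_strip_curved_slab_le) auto
    fix \<eta> \<sigma>' \<sigma>''
    assume in_E: "(\<eta>, \<sigma>') \<in> {v. z - v \<in> wave_shell \<sigma> N L \<and> v \<in> paraboloid_strip c s w N2 L2}"
      "(\<eta>, \<sigma>'') \<in> {v. z - v \<in> wave_shell \<sigma> N L \<and> v \<in> paraboloid_strip c s w N2 L2}"
    have "\<tau> + (norm \<eta>)\<^sup>2 + \<sigma> * norm (\<xi> - \<eta>) = (\<tau> - \<sigma>' + \<sigma> * norm (\<xi> - \<eta>)) + (\<sigma>' + (norm \<eta>)\<^sup>2)"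
      by simp
    with in_E(1) show "\<eta> \<in> ?P"
      by (auto simp: z wave_shell_def paraboloid_strip_def)
    show "\<bar>\<sigma>' - \<sigma>''\<bar> \<le> 4 * min L L2"
      using in_E by (auto simp: z wave_shell_def paraboloid_strip_def min_def)
  qed (use assms in simp_all)
  moreover have "?B \<le> 2048 * w * L * L2 / N2"
  proof -
    have "?B = 1024 * w * (min L L2 * (L + L2)) / N2"
      by (simp add: field_simps)
    also have "\<dots> \<le> 1024 * w * (2 * L * L2) / N2"
      using assms min_mult_add_le[of L L2] by (intro divide_right_mono mult_left_mono) auto
    finally show ?thesis
      by simp
  qed
  ultimately show ?thesis
    by (meson ennreal_leI order_trans)
qed

lemma emeasure_wave_paraboloid_fiber_le':
  fixes z :: pt
  assumes "c\<^sup>2 + s\<^sup>2 = 1" and "w \<ge> 0" "L \<ge> 1" "L1 \<ge> 1" "8 \<le> N1" "8 * w \<le> N1" "\<bar>\<sigma>\<bar> \<le> 1"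
  shows "emeasure lborel {v. v - z \<in> wave_shell \<sigma> N L \<and> v \<in> paraboloid_strip c s w N1 L1}
         \<le> ennreal (2048 * w * L * L1 / N1)"
proof -
  have "v - z \<in> wave_shell \<sigma> N L \<longleftrightarrow> z - v \<in> wave_shell (- \<sigma>) N L" for v
    using uminus_in_wave_shell_iff[of "z - v" \<sigma> N L] by simp
  moreover have "emeasure lborel {v. z - v \<in> wave_shell (- \<sigma>) N L \<and> v \<in> paraboloid_strip c s w N1 L1}
      \<le> ennreal (2048 * w * L * L1 / N1)"
    using assms by (intro emeasure_wave_paraboloid_fiber_le) auto
  ultimately show ?thesis
    by simp
qed

lemma twelfth_power_of_bound:
  fixes C N N1 L L1 L2 :: real
  assumes "N > 0" "N1 > 0" "L > 0" "L1 > 0" "L2 > 0"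
  shows "(C * L1 powr (5/12) * L2 powr (5/12) * L powr (5/12) * (1 / sqrt N) * (N / N1) powr (1/4)) ^ 12
       = C ^ 12 * (L * L1 * L2) ^ 5 / (N ^ 3 * N1 ^ 3)"
proof -
  have "(x powr (5/12)) ^ 12 = x ^ 5" if "x > 0" for x :: real
    using that by (simp add: powr_power powr_numeral)
  moreover have "((N / N1) powr (1/4)) ^ 12 = N ^ 3 / N1 ^ 3"
    using assms by (simp add: powr_power powr_numeral power_divide)
  moreover have "(1 / sqrt N) ^ 12 = 1 / (N ^ 3 * N ^ 3)"
    using assms(1) power_mult[of "sqrt N" 2 6] by (simp add: power_one_over flip: power_add)
  ultimately show ?thesis
    using assms unfolding power_mult_distrib by (simp only:) (simp add: field_simps)
qed

lemma le_of_three_sqrt_bounds: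
  fixes I D K N N1 N2 L L1 L2 :: real
  assumes "I \<ge> 0" "D > 0" "K \<ge> 1"
    and N: "N > 0" "N1 > 0" "N2 > 0" "N \<le> K * N1" "N1 \<le> K * N2"
    and L: "L \<ge> 1" "L1 \<ge> 1" "L2 \<ge> 1"
    and I: "I \<le> sqrt (D * L1 * L2 / N)" "I \<le> sqrt (2 * D * L * L2 / N2)" "I \<le> sqrt (2 * D * L * L1 / N1)"
  shows "I \<le> ((4 * D ^ 3)\<^sup>2 * K ^ 3 + 1) * L1 powr (5/12) * L2 powr (5/12) * L powr (5/12)
              * (1 / sqrt N) * (N / N1) powr (1/4)"
proof -
  define C where "C = (4 * D ^ 3)\<^sup>2 * K ^ 3 + 1"
  define P where "P = L * L1 * L2"
  have P: "P \<ge> 1"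
    using L mult_mono[of 1 L 1 L1] mult_mono[of 1 "L * L1" 1 L2] by (simp add: P_def)
  have C: "C \<ge> 1"
    using assms(2,3) by (simp add: C_def)
  have sq: "I\<^sup>2 \<le> m" if "I \<le> sqrt m" "m \<ge> 0" for m
    using that assms(1) by (metis power_mono real_sqrt_pow2)
  text \<open>The geometric mean of the three bounds, in the twelfth power.\<close>
  have "I ^ 6 = I\<^sup>2 * I\<^sup>2 * I\<^sup>2"
    by (simp flip: power_add)
  also have "\<dots> \<le> (D * L1 * L2 / N) * (2 * D * L * L2 / N2) * (2 * D * L * L1 / N1)"
    using sq I assms(2) L N by (intro mult_mono) auto
  also have "\<dots> = 4 * D ^ 3 * P\<^sup>2 / (N * N1 * N2)"
    by (simp add: P_def field_simps power2_eq_square power3_eq_cube)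
  finally have "I ^ 12 \<le> (4 * D ^ 3 * P\<^sup>2 / (N * N1 * N2))\<^sup>2"
    using assms(1) power_mono[of "I ^ 6" _ 2] by (simp flip: power_mult)
  also have "\<dots> = ((4 * D ^ 3)\<^sup>2 * (N * N1)) * P ^ 4 / (N ^ 3 * N1 ^ 3 * N2\<^sup>2)"
    using N by (simp add: field_simps power2_eq_square power3_eq_cube power_numeral_reduce)
  also have "\<dots> \<le> (C ^ 12 * N2\<^sup>2 * P) * P ^ 4 / (N ^ 3 * N1 ^ 3 * N2\<^sup>2)"
  proof (intro divide_right_mono mult_right_mono)
    have "N * N1 \<le> K ^ 3 * N2\<^sup>2"
    proof -
      have "N * N1 \<le> K * N1\<^sup>2"
        using N by (simp add: power2_eq_square mult_right_mono)
      also have "\<dots> \<le> K * (K * N2)\<^sup>2"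
        using N assms(3) by (intro mult_left_mono power_mono) auto
      finally show ?thesis
        by (simp add: power2_eq_square power3_eq_cube ac_simps)
    qed
    then have "(4 * D ^ 3)\<^sup>2 * (N * N1) \<le> (4 * D ^ 3)\<^sup>2 * (K ^ 3 * N2\<^sup>2)"
      by (rule mult_left_mono) simp
    also have "\<dots> \<le> C * N2\<^sup>2"
      by (simp add: C_def algebra_simps)
    also have "\<dots> \<le> C ^ 12 * N2\<^sup>2 * P"
      using C P power_increasing[of 1 12 C] mult_mono[of C "C ^ 12" "N2\<^sup>2" "N2\<^sup>2 * P"]
        mult_left_mono[of 1 P "N2\<^sup>2"] by (simp add: mult.assoc)
    finally show "(4 * D ^ 3)\<^sup>2 * (N * N1) \<le> C ^ 12 * N2\<^sup>2 * P" .
  qed (use N P in auto)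
  also have "\<dots> = C ^ 12 * (P * P ^ 4) / (N ^ 3 * N1 ^ 3)"
    using N by (simp add: field_simps)
  also have "\<dots> = (C * L1 powr (5/12) * L2 powr (5/12) * L powr (5/12) * (1 / sqrt N) * (N / N1) powr (1/4)) ^ 12"
    by (subst twelfth_power_of_bound) (use N L in \<open>simp_all add: P_def flip: power_Suc\<close>)
  finally have "I ^ Suc 11 \<le> (C * L1 powr (5/12) * L2 powr (5/12) * L powr (5/12) * (1 / sqrt N) * (N / N1) powr (1/4)) ^ Suc 11"
    by (simp only: numeral_eq_Suc) simp
  then show ?thesis
    unfolding C_def[symmetric] by (rule power_le_imp_le_base) (use C N in simp)
qed

lemma dyadic_ge_1: "dyadic x \<Longrightarrow> x \<ge> 1"
  unfolding dyadic_def by auto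

lemma nonneg_L2_ball_norm:
  fixes f :: "pt \<Rightarrow> complex"
  assumes "L2unit f"
  shows "nonneg_L2_ball (\<lambda>z. norm (f z))"
proof -
  have [measurable]: "f \<in> borel_measurable borel"
    using assms by (simp add: L2unit_def)
  have "(\<integral>\<^sup>+z. ennreal ((norm (f z))\<^sup>2) \<partial>lborel) = ennreal (\<integral>z. (norm (f z))\<^sup>2 \<partial>lborel)"
    using assms unfolding L2unit_def by (intro nn_integral_eq_integral) auto
  with assms have "(\<integral>\<^sup>+z. ennreal ((norm (f z))\<^sup>2) \<partial>lborel) = 1"
    by (simp add: L2unit_def)
  then show ?thesis
    unfolding nonneg_L2_ball_def by simp
qed

lemma frequency_bounds:
  fixes K N N1 N2 :: real and A :: nat
  assumes K: "K \<ge> 1" and "2400 * K ^ 4 \<le> N" "N \<le> K * N1" "N1 \<le> K * N2" "N2 \<le> K * N1" "N1 \<le> K * real A"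
  shows "16 * (150 * K\<^sup>2) \<le> N" "8 * (150 * K\<^sup>2) \<le> N1" "8 * (150 * K\<^sup>2) \<le> N2"
    and "36 * pi * N1 / real A \<le> 150 * K\<^sup>2" "36 * pi * N2 / real A \<le> 150 * K\<^sup>2" "A > 0"
proof -
  have K2: "K \<le> K\<^sup>2" "1 \<le> K\<^sup>2" "K\<^sup>2 \<le> K ^ 3" "K ^ 3 \<le> K ^ 4"
    using K power_increasing[of 1 2 K] power_increasing[of 0 2 K] power_increasing[of 2 3 K] power_increasing[of 3 4 K]
    by simp_all
  have "K * (2400 * K ^ 3) \<le> K * N1"
    using assms(2,3) by (simp add: power_numeral_reduce algebra_simps)
  then have N1: "2400 * K ^ 3 \<le> N1"
    using K by simp
  have "K * (2400 * K\<^sup>2) \<le> K * N2" "K * (2400 * K\<^sup>2) \<le> K * real A"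
    using N1 assms(4,6) by (simp_all add: power_numeral_reduce power2_eq_square algebra_simps)
  then have N2: "2400 * K\<^sup>2 \<le> N2" and A: "2400 * K\<^sup>2 \<le> real A"
    using K by simp_all
  show "16 * (150 * K\<^sup>2) \<le> N" "8 * (150 * K\<^sup>2) \<le> N1" "8 * (150 * K\<^sup>2) \<le> N2"
    using assms(2) N1 N2 K2 by linarith+
  show A0: "A > 0"
    using A K2 by simp
  have "N2 \<le> K * (K * real A)"
    using assms(5) mult_left_mono[OF assms(6), of K] K by linarith
  then have ratio: "N1 / real A \<le> K" "N2 / real A \<le> K\<^sup>2"
    using assms(6) A0 by (simp_all add: divide_le_eq power2_eq_square algebra_simps)
  have "36 * pi * (N1 / real A) \<le> 36 * 4 * K\<^sup>2" "36 * pi * (N2 / real A) \<le> 36 * 4 * K\<^sup>2"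
    using ratio K2 pi_less_4 N1 N2 A0 by (intro mult_mono; simp)+
  then show "36 * pi * N1 / real A \<le> 150 * K\<^sup>2" "36 * pi * N2 / real A \<le> 150 * K\<^sup>2"
    using K2 by simp_all
qed

lemma wave_schroedinger_trilinear_estimate:
  fixes K N N1 N2 L L1 L2 \<sigma> :: real and A j1 j2 :: nat and f g1 g2 :: "pt \<Rightarrow> complex"
  assumes K: "K \<ge> 1" and dyadic: "dyadic L" "dyadic L1" "dyadic L2"
    and freq: "2400 * K ^ 4 \<le> N" "N \<le> K * N1" "N1 \<le> K * N2" "N2 \<le> K * N1" "N1 \<le> K * real A"
    and j: "\<bar>int j1 - int j2\<bar> \<le> 16" and \<sigma>: "\<sigma> = 1 \<or> \<sigma> = -1"
    and unit: "L2unit f" "L2unit g1" "L2unit g2"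
    and supp_f: "\<forall>z. z \<notin> PP N \<inter> WW \<sigma> L \<longrightarrow> f z = 0"
    and supp_g1: "\<forall>z. z \<notin> QQ A j1 \<inter> PP N1 \<inter> SS L1 \<longrightarrow> g1 z = 0"
    and supp_g2: "\<forall>z. z \<notin> QQ A j2 \<inter> PP N2 \<inter> SS L2 \<longrightarrow> g2 z = 0"
  shows "norm (\<integral>p. f (fst p - snd p) * g1 (fst p) * g2 (snd p) \<partial>(lborel \<Otimes>\<^sub>M lborel))
         \<le> ((4 * (1024 * (150 * K\<^sup>2)) ^ 3)\<^sup>2 * K ^ 3 + 1) * L1 powr (5/12) * L2 powr (5/12) * L powr (5/12)
              * (1 / sqrt N) * (N / N1) powr (1/4)"
proof -
  define w where "w = 150 * K\<^sup>2"
  define c s where "c = cos (pi * real j1 / real A)" and "s = sin (pi * real j1 / real A)"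
  have cs: "c\<^sup>2 + s\<^sup>2 = 1"
    by (simp add: c_def s_def)
  note bounds = frequency_bounds[OF K freq, folded w_def]
  have L: "L \<ge> 1" "L1 \<ge> 1" "L2 \<ge> 1"
    using dyadic by (simp_all add: dyadic_ge_1)
  have "1 \<le> K\<^sup>2"
    using K by (simp add: one_le_power)
  then have N: "N > 0" "N1 > 0" "N2 > 0" "N \<noteq> 1" "N1 \<noteq> 1" "N2 \<noteq> 1" "w \<ge> 1"
    using bounds by (auto simp: w_def)
  have [measurable]: "f \<in> borel_measurable borel" "g1 \<in> borel_measurable borel" "g2 \<in> borel_measurable borel"
    using unit by (simp_all add: L2unit_def)
  text \<open>Both angular sectors lie in the strip of width \<open>\<approx> N\<^sub>1/A \<approx> 1\<close> around the direction of sector \<open>j\<^sub>1\<close>.\<close>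
  have "QQ A j1 \<inter> PP N1 \<inter> SS L1 \<subseteq> paraboloid_strip c s w N1 L1"
    unfolding c_def s_def using N bounds by (intro QQ_PP_SS_subset_paraboloid_strip) auto
  then have supp_b: "z \<notin> paraboloid_strip c s w N1 L1 \<Longrightarrow> norm (g1 z) = 0" for z
    using supp_g1 by (metis norm_zero subsetD)
  have "QQ A j2 \<inter> PP N2 \<inter> SS L2 \<subseteq> paraboloid_strip c s w N2 L2"
    unfolding c_def s_def using N bounds j by (intro QQ_PP_SS_subset_paraboloid_strip) auto
  then have supp_c: "z \<notin> paraboloid_strip c s w N2 L2 \<Longrightarrow> norm (g2 z) = 0" for z
    using supp_g2 by (metis norm_zero subsetD)
  have supp_a: "z \<notin> wave_shell \<sigma> N L \<Longrightarrow> norm (f z) = 0" for z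
    using supp_f PP_WW_subset_wave_shell[OF N(4)] by (metis norm_zero subsetD)
  define J where "J = convolution_pairing (\<lambda>z. norm (f z)) (\<lambda>z. norm (g1 z)) (\<lambda>z. norm (g2 z))"
  note balls = nonneg_L2_ball_norm[OF unit(1)] nonneg_L2_ball_norm[OF unit(2)] nonneg_L2_ball_norm[OF unit(3)]
  have "J \<le> ennreal (sqrt (1024 * w * L1 * L2 / N))"
    unfolding J_def
  proof (rule convolution_pairing_le_fiber_diff[OF balls _ _ supp_a supp_b supp_c])
    show "emeasure lborel {v. z + v \<in> paraboloid_strip c s w N1 L1 \<and> v \<in> paraboloid_strip c s w N2 L2}
        \<le> ennreal (1024 * w * L1 * L2 / N)" if "z \<in> wave_shell \<sigma> N L" for z
      using that cs N L bounds by (intro emeasure_paraboloid_strip_pair_fiber_le) (auto simp: wave_shell_def)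
  qed (use N L in \<open>simp_all add: wave_shell_borel paraboloid_strip_borel\<close>)
  moreover have "J \<le> ennreal (sqrt (2048 * w * L * L2 / N2))"
    unfolding J_def
  proof (rule convolution_pairing_le_fiber_fst[OF balls _ _ supp_a supp_b supp_c])
    show "emeasure lborel {v. z - v \<in> wave_shell \<sigma> N L \<and> v \<in> paraboloid_strip c s w N2 L2}
        \<le> ennreal (2048 * w * L * L2 / N2)" for z
      using cs N L bounds \<sigma> by (intro emeasure_wave_paraboloid_fiber_le) (auto simp: w_def)
  qed (use N L in \<open>simp_all add: wave_shell_borel paraboloid_strip_borel\<close>)
  moreover have "J \<le> ennreal (sqrt (2048 * w * L * L1 / N1))"
    unfolding J_def
  proof (rule convolution_pairing_le_fiber_snd[OF balls _ _ supp_a supp_b supp_c])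
    show "emeasure lborel {v. v - z \<in> wave_shell \<sigma> N L \<and> v \<in> paraboloid_strip c s w N1 L1}
        \<le> ennreal (2048 * w * L * L1 / N1)" for z
      using cs N L bounds \<sigma> by (intro emeasure_wave_paraboloid_fiber_le') (auto simp: w_def)
  qed (use N L in \<open>simp_all add: wave_shell_borel paraboloid_strip_borel\<close>)
  ultimately have "enn2real J \<le> ((4 * (1024 * w) ^ 3)\<^sup>2 * K ^ 3 + 1) * L1 powr (5/12) * L2 powr (5/12) * L powr (5/12)
              * (1 / sqrt N) * (N / N1) powr (1/4)"
    using K N L freq by (intro le_of_three_sqrt_bounds) (auto intro: enn2real_leI)
  then show ?thesis
    using norm_integral_le_convolution_pairing[of f g1 g2] by (simp add: J_def w_def)
qed

theorem proposition4p7: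
  "\<forall>K::real \<ge> 1. \<exists>C0 C :: real. \<forall>(N::real) (N1::real) (N2::real) (A::nat) (L::real) (L1::real) (L2::real)
      (j1::nat) (j2::nat) (s::real) (f::pt \<Rightarrow> complex) (g1::pt \<Rightarrow> complex) (g2::pt \<Rightarrow> complex).
     dyadic N \<and> dyadic N1 \<and> dyadic N2 \<and> dyadic (real A) \<and> dyadic L \<and> dyadic L1 \<and> dyadic L2
     \<and> C0 \<le> N \<and> N \<le> K * N1 \<and> N1 \<le> K * N2 \<and> N2 \<le> K * N1
     \<and> real A \<le> K * N1 \<and> N1 \<le> K * real A
     \<and> j1 < A \<and> j2 < A \<and> \<bar>int j1 - int j2\<bar> \<le> 16
     \<and> (s = 1 \<or> s = -1)
     \<and> L2unit f \<and> L2unit g1 \<and> L2unit g2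
     \<and> (\<forall>z. z \<notin> PP N \<inter> WW s L \<longrightarrow> f z = 0)
     \<and> (\<forall>z. z \<notin> QQ A j1 \<inter> PP N1 \<inter> SS L1 \<longrightarrow> g1 z = 0)
     \<and> (\<forall>z. z \<notin> QQ A j2 \<inter> PP N2 \<inter> SS L2 \<longrightarrow> g2 z = 0)
     \<longrightarrow> norm (\<integral>p. f (fst p - snd p) * g1 (fst p) * g2 (snd p) \<partial>(lborel \<Otimes>\<^sub>M lborel))
         \<le> C * L1 powr (5/12) * L2 powr (5/12) * L powr (5/12) * (1 / sqrt N) * (N / N1) powr (1/4)"
  apply (intro allI impI)
  subgoal for K
    by (intro exI[of _ "2400 * K ^ 4"] exI[of _ "(4 * (1024 * (150 * K\<^sup>2)) ^ 3)\<^sup>2 * K ^ 3 + 1"] allI impI,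
        elim conjE, rule wave_schroedinger_trilinear_estimate) assumption+
  done

end
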